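(* Let $\{x_n\}\subset X$, $\{y_n\}\subset X^{\ast}$ form a cross-frame in the Banach space $X$, and suppose $\{x_n\}$ is not a basis of $X$. Let $\{\lambda_n\}$ be a separated sequence of real numbers, i.e. there is $\delta>0$ with $|\lambda_n-\lambda_m|>\delta$ for all $n\neq m$. Then there is no one-parameter group of operators $\{T_t\}_{t\in\mathbb R}$ on $X$ such that $T_tx_n=e^{i\lambda_n t}x_n$ for all $n$ and all $t\in\mathbb R$.
   Context: $X$ is a (complex) Banach space, $X^{\ast}$ its dual, and $(x,y)$ denotes the value of $y\in X^{\ast}$ at $x\in X$. $X_d$ is a Banach space of scalar sequences $a=\{a_n\}$ in which the unit vectors $\varepsilon_n=\{\delta_{nj}\}_j$ form a basis; its dual $X_d^{\ast}$ is identified with a space of sequences via $b\mapsto\{b(\varepsilon_n)\}$, and it is assumed that the coordinate functionals $\{\varepsilon_n^{\ast}\}$ form a basis of $X_d^{\ast}$. A sequence $\{y_n\}\subset X^{\ast}$ is a frame if there are $A,B>0$ such that $\{(x,y_n)\}\in X_d$ and $A\|x\|_X\le \|\{(x,y_n)\}\|_{X_d}\le B\|x\|_X$ for all $x\in X$. A sequence $\{x_n\}\subset X$ (with $x_n\neq0$) is a co-frame if $\{(x_n,y)\}\in X_d^{\ast}$ for all $y\in X^{\ast}$ and there are $\tilde A,\tilde B>0$ with $\tilde A\|y\|_{X^{\ast}}\le \|\{(x_n,y)\}\|_{X_d^{\ast}}\le \tilde B\|y\|_{X^{\ast}}$ for all $y\in X^{\ast}$. A co-frame $\{x_n\}$ and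 a frame $\{y_n\}$ form a cross-frame if $x=\sum_n (x,y_n)x_n$ for all $x\in X$ and $y=\sum_n (x_n,y)y_n$ for all $y\in X^{\ast}$. A one-parameter group of operators on $X$ is a family $\{T_t\}_{t\in\mathbb R}$ of bounded linear operators on $X$ with $T_{t+s}=T_tT_s$ for all $t,s$ and $T_0=I_X$. *)

theory Defs
  imports "HOL-Analysis.Analysis" "HOL-Library.Function_Algebras"
begin

text \<open>A complex Banach space is modelled as a
real Banach space (type class banach) together with a complex scalar multiplication sm
extending the real one and compatible with the norm.\<close>

definition cscalar :: "(complex \<Rightarrow> 'a::banach \<Rightarrow> 'a) \<Rightarrow> bool" where
  "cscalar sm \<longleftrightarrow>
     (\<forall>r x. sm (complex_of_real r) x = r *\<^sub>R x) \<and>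
     (\<forall>a b x. sm (a * b) x = sm a (sm b x)) \<and>
     (\<forall>a b x. sm (a + b) x = sm a x + sm b x) \<and>
     (\<forall>a x y. sm a (x + y) = sm a x + sm a y) \<and>
     (\<forall>a x. norm (sm a x) = cmod a * norm x)"

definition cdual :: "(complex \<Rightarrow> 'a::banach \<Rightarrow> 'a) \<Rightarrow> ('a \<Rightarrow> complex) \<Rightarrow> bool" where
  "cdual sm f \<longleftrightarrow> bounded_linear f \<and> (\<forall>c z. f (sm c z) = c * f z)"

definition cbounded_op :: "(complex \<Rightarrow> 'a::banach \<Rightarrow> 'a) \<Rightarrow> ('a \<Rightarrow> 'a) \<Rightarrow> bool" where
  "cbounded_op sm T \<longleftrightarrow> bounded_linear T \<and> (\<forall>c z. T (sm c z) = sm c (T z))"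

definition cbasis :: "(complex \<Rightarrow> 'a::banach \<Rightarrow> 'a) \<Rightarrow> (nat \<Rightarrow> 'a) \<Rightarrow> bool" where
  "cbasis sm x \<longleftrightarrow> (\<forall>z. \<exists>!c. (\<lambda>n. sm (c n) (x n)) sums z)"

definition unitv :: "nat \<Rightarrow> nat \<Rightarrow> complex" where
  "unitv n = (\<lambda>j. if j = n then 1 else 0)"

text \<open>X_d is given by a set S of scalar sequences and a norm N on it.\<close>
definition seq_space :: "(nat \<Rightarrow> complex) set \<Rightarrow> ((nat \<Rightarrow> complex) \<Rightarrow> real) \<Rightarrow> bool" where
  "seq_space S N \<longleftrightarrow>
     0 \<in> S \<and> (\<forall>a\<in>S. \<forall>b\<in>S. a + b \<in> S) \<and> (\<forall>c. \<forall>a\<in>S. (\<lambda>n. c * a n) \<in> S) \<and>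
     (\<forall>a\<in>S. 0 \<le> N a) \<and> (\<forall>a\<in>S. N a = 0 \<longleftrightarrow> a = 0) \<and>
     (\<forall>c. \<forall>a\<in>S. N (\<lambda>n. c * a n) = cmod c * N a) \<and>
     (\<forall>a\<in>S. \<forall>b\<in>S. N (a + b) \<le> N a + N b) \<and>
     (\<forall>s. (\<forall>n. s n \<in> S) \<and> (\<forall>e>0. \<exists>M. \<forall>m\<ge>M. \<forall>n\<ge>M. N (s m - s n) < e)
          \<longrightarrow> (\<exists>a\<in>S. (\<lambda>n. N (s n - a)) \<longlonglongrightarrow> 0)) \<and>
     (\<forall>n. unitv n \<in> S)"

definition unit_basis :: "(nat \<Rightarrow> complex) set \<Rightarrow> ((nat \<Rightarrow> complex) \<Rightarrow> real) \<Rightarrow> bool" where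
  "unit_basis S N \<longleftrightarrow>
     (\<forall>a\<in>S. \<exists>!c. (\<lambda>n. N (a - (\<Sum>k<n. (\<lambda>j. c k * unitv k j)))) \<longlonglongrightarrow> 0)"

definition seq_func :: "(nat \<Rightarrow> complex) set \<Rightarrow> ((nat \<Rightarrow> complex) \<Rightarrow> real) \<Rightarrow> ((nat \<Rightarrow> complex) \<Rightarrow> complex) \<Rightarrow> bool" where
  "seq_func S N b \<longleftrightarrow>
     (\<forall>a\<in>S. \<forall>a'\<in>S. b (a + a') = b a + b a') \<and>
     (\<forall>c. \<forall>a\<in>S. b (\<lambda>n. c * a n) = c * b a) \<and>
     (\<exists>C. \<forall>a\<in>S. cmod (b a) \<le> C * N a)"

text \<open>The dual X_d^*, identified with sequences via b \<mapsto> (b(e_n))_n.\<close>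
definition seq_dual :: "(nat \<Rightarrow> complex) set \<Rightarrow> ((nat \<Rightarrow> complex) \<Rightarrow> real) \<Rightarrow> (nat \<Rightarrow> complex) set" where
  "seq_dual S N = {\<beta>. \<exists>b. seq_func S N b \<and> (\<forall>n. b (unitv n) = \<beta> n)}"

definition seq_dual_fun :: "(nat \<Rightarrow> complex) set \<Rightarrow> ((nat \<Rightarrow> complex) \<Rightarrow> real) \<Rightarrow> (nat \<Rightarrow> complex) \<Rightarrow> ((nat \<Rightarrow> complex) \<Rightarrow> complex)" where
  "seq_dual_fun S N \<beta> = (SOME b. seq_func S N b \<and> (\<forall>n. b (unitv n) = \<beta> n))"

definition seq_dual_norm :: "(nat \<Rightarrow> complex) set \<Rightarrow> ((nat \<Rightarrow> complex) \<Rightarrow> real) \<Rightarrow> (nat \<Rightarrow> complex) \<Rightarrow> real" where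
  "seq_dual_norm S N \<beta> = (SUP a\<in>{a\<in>S. N a \<le> 1}. cmod (seq_dual_fun S N \<beta> a))"

text \<open>The coordinate functionals (as elements of X_d^* they are the sequences unitv n)
  form a basis of X_d^*.\<close>
definition coord_dual_basis :: "(nat \<Rightarrow> complex) set \<Rightarrow> ((nat \<Rightarrow> complex) \<Rightarrow> real) \<Rightarrow> bool" where
  "coord_dual_basis S N \<longleftrightarrow>
     (\<forall>\<beta>\<in>seq_dual S N. \<exists>!c.
        (\<lambda>n. seq_dual_norm S N (\<beta> - (\<Sum>k<n. (\<lambda>j. c k * unitv k j)))) \<longlonglongrightarrow> 0)"

definition Xd_space :: "(nat \<Rightarrow> complex) set \<Rightarrow> ((nat \<Rightarrow> complex) \<Rightarrow> real) \<Rightarrow> bool" where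
  "Xd_space S N \<longleftrightarrow> seq_space S N \<and> unit_basis S N \<and> coord_dual_basis S N"

definition is_frame :: "(complex \<Rightarrow> 'a::banach \<Rightarrow> 'a) \<Rightarrow> (nat \<Rightarrow> complex) set \<Rightarrow> ((nat \<Rightarrow> complex) \<Rightarrow> real) \<Rightarrow> (nat \<Rightarrow> 'a \<Rightarrow> complex) \<Rightarrow> bool" where
  "is_frame sm S N y \<longleftrightarrow> (\<forall>n. cdual sm (y n)) \<and>
     (\<exists>A B. A > 0 \<and> B > 0 \<and> (\<forall>z. (\<lambda>n. y n z) \<in> S \<and>
        A * norm z \<le> N (\<lambda>n. y n z) \<and> N (\<lambda>n. y n z) \<le> B * norm z))"

definition is_coframe :: "(complex \<Rightarrow> 'a::banach \<Rightarrow> 'a) \<Rightarrow> (nat \<Rightarrow> complex) set \<Rightarrow> ((nat \<Rightarrow> complex) \<Rightarrow> real) \<Rightarrow> (nat \<Rightarrow> 'a) \<Rightarrow> bool" where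
  "is_coframe sm S N x \<longleftrightarrow> (\<forall>n. x n \<noteq> 0) \<and>
     (\<exists>A B. A > 0 \<and> B > 0 \<and> (\<forall>f. cdual sm f \<longrightarrow> (\<lambda>n. f (x n)) \<in> seq_dual S N \<and>
        A * onorm f \<le> seq_dual_norm S N (\<lambda>n. f (x n)) \<and>
        seq_dual_norm S N (\<lambda>n. f (x n)) \<le> B * onorm f))"

definition is_cross_frame :: "(complex \<Rightarrow> 'a::banach \<Rightarrow> 'a) \<Rightarrow> (nat \<Rightarrow> complex) set \<Rightarrow> ((nat \<Rightarrow> complex) \<Rightarrow> real) \<Rightarrow> (nat \<Rightarrow> 'a) \<Rightarrow> (nat \<Rightarrow> 'a \<Rightarrow> complex) \<Rightarrow> bool" where
  "is_cross_frame sm S N x y \<longleftrightarrow> is_coframe sm S N x \<and> is_frame sm S N y \<and>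
     (\<forall>z. (\<lambda>n. sm (y n z) (x n)) sums z) \<and>
     (\<forall>f. cdual sm f \<longrightarrow>
        (\<lambda>n. onorm (\<lambda>z. f z - (\<Sum>k<n. f (x k) * y k z))) \<longlonglongrightarrow> 0)"

definition one_param_group :: "(complex \<Rightarrow> 'a::banach \<Rightarrow> 'a) \<Rightarrow> (real \<Rightarrow> 'a \<Rightarrow> 'a) \<Rightarrow> bool" where
  "one_param_group sm T \<longleftrightarrow> (\<forall>t. cbounded_op sm (T t)) \<and>
     (\<forall>t s. T (t + s) = T t \<circ> T s) \<and> T 0 = id"

end

theory Submission
  imports Defs
begin

text \<open>
  Suppose such a group \<open>T\<close> existed. The orbit maps \<open>u \<mapsto> T u v\<close> are continuous on the dense
  set of finite combinations of the \<open>x n\<close>, so by Baire's theorem the operators \<open>T u\<close> are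
  uniformly bounded on compact intervals of \<open>u\<close>. Since \<open>x\<close> is not a basis, there is a
  nontrivial expansion \<open>\<Sum>n. d n x n = 0\<close>; choosing a frame functional \<open>y k\<close> with
  \<open>y k (x m) \<noteq> 0\<close>, the trigonometric sums \<open>\<Sum>n<K. d n y k (x n) e^(i lam n u)\<close> equal
  \<open>y k (T u (\<Sum>n<K. d n x n))\<close> and hence tend to 0 uniformly on compact intervals.
  Integrating such a sum twice over \<open>[0, L]\<close> after removing the frequency \<open>lam m\<close> produces
  the term \<open>d m y k (x m) L\<^sup>2\<close>, while by the separation of the frequencies all other terms
  contribute \<open>O(1/\<delta>\<^sup>2)\<close> in total; letting \<open>L \<rightarrow> \<infinity>\<close> forces \<open>d m y k (x m) = 0\<close>.
\<close>

lemma cscalar_laws: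
  assumes "cscalar sm"
  shows cscalar_of_real: "sm (complex_of_real r) v = r *\<^sub>R v"
    and cscalar_mult: "sm (a * b) v = sm a (sm b v)"
    and cscalar_add_left: "sm (a + b) v = sm a v + sm b v"
  using assms unfolding cscalar_def by auto

lemma cscalar_diff_left:
  assumes "cscalar sm"
  shows "sm (a - b) v = sm a v - sm b v"
  using cscalar_add_left[OF assms, of "a - b" b v] by (simp add: algebra_simps)

lemma cscalar_zero_left:
  assumes "cscalar sm"
  shows "sm 0 v = 0"
  using cscalar_of_real[OF assms, of 0] by simp

lemma cscalar_Re_Im:
  assumes "cscalar sm"
  shows "sm a v = Re a *\<^sub>R v + Im a *\<^sub>R sm \<i> v"
proof -
  have "sm a v = sm (complex_of_real (Re a) + complex_of_real (Im a) * \<i>) v"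
    by (rule arg_cong[where f = "\<lambda>c. sm c v"]) (simp add: complex_eq_iff)
  then show ?thesis
    by (simp only: cscalar_add_left[OF assms] cscalar_mult[OF assms] cscalar_of_real[OF assms])
qed

lemma continuous_on_cscalar:
  assumes "cscalar sm" and "continuous_on S g"
  shows "continuous_on S (\<lambda>u. sm (g u) v)"
proof -
  have "continuous_on S (\<lambda>u. Re (g u) *\<^sub>R v + Im (g u) *\<^sub>R sm \<i> v)"
    by (intro continuous_intros assms(2))
  then show ?thesis
    by (simp only: cscalar_Re_Im[OF assms(1), symmetric])
qed

lemma not_cbasis_imp_null_expansion:
  assumes "cscalar sm" and expansion: "\<And>z. \<exists>c. (\<lambda>n. sm (c n) (e n)) sums z"
    and "\<not> cbasis sm e"
  obtains d m where "d m \<noteq> 0" "(\<lambda>n. sm (d n) (e n)) sums 0"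
proof -
  obtain z where "\<not> (\<exists>!c. (\<lambda>n. sm (c n) (e n)) sums z)"
    using assms(3) unfolding cbasis_def by blast
  moreover obtain c where c: "(\<lambda>n. sm (c n) (e n)) sums z"
    using expansion by blast
  ultimately obtain c' where c': "(\<lambda>n. sm (c' n) (e n)) sums z" and "c' \<noteq> c"
    by blast
  then obtain m where "c' m \<noteq> c m"
    by (auto simp: fun_eq_iff)
  then have "c m - c' m \<noteq> 0"
    by simp
  moreover have "(\<lambda>n. sm (c n - c' n) (e n)) sums 0"
    using sums_diff[OF c c'] by (simp add: cscalar_diff_left[OF assms(1)])
  ultimately show thesis
    by (rule that)
qed

lemma cbounded_op_sum_eigenvectors:
  assumes "cscalar sm" "cbounded_op sm A" and eigen: "\<And>n. A (e n) = sm (\<mu> n) (e n)"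
  shows "A (\<Sum>n<K. sm (c n) (e n)) = (\<Sum>n<K. sm (c n * \<mu> n) (e n))"
proof -
  have "linear A" and "\<And>c v. A (sm c v) = sm c (A v)"
    using assms(2) unfolding cbounded_op_def by (auto simp: bounded_linear.linear)
  then show ?thesis
    by (simp add: linear_sum eigen cscalar_mult[OF assms(1)])
qed

section \<open>Trigonometric sums with separated frequencies\<close>

lemma has_integral_cis:
  fixes L w :: real
  assumes "0 \<le> L" "w \<noteq> 0"
  shows "((\<lambda>s. cis (w * s)) has_integral (cis (w * L) - 1) / (\<i> * w)) {0..L}"
proof -
  define F where "F z = exp (\<i> * (of_real w * z)) / (\<i> * of_real w)" for z :: complex
  have "(F has_field_derivative exp (\<i> * (of_real w * z))) (at z)" for z
    unfolding F_def using assms(2)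
    by (auto intro!: derivative_eq_intros simp: field_simps)
  then have "((\<lambda>s. F (of_real s)) has_vector_derivative cis (w * s)) (at s within {0..L})" for s
    using has_vector_derivative_real_field by (fastforce simp: cis_conv_exp)
  from fundamental_theorem_of_calculus[OF assms(1) this]
  show ?thesis
    unfolding F_def by (simp add: cis_conv_exp diff_divide_distrib)
qed

lemma norm_integral_cis_le:
  fixes L w :: real
  assumes "0 \<le> L" "w \<noteq> 0"
  shows "cmod (integral {0..L} (\<lambda>s. cis (w * s))) \<le> 2 / \<bar>w\<bar>"
proof -
  have "cmod (cis (w * L) - 1) \<le> 2"
    using norm_triangle_ineq4[of "cis (w * L)" 1] by simp
  then show ?thesis
    using integral_unique[OF has_integral_cis[OF assms]] assms(2)
    by (simp add: norm_divide norm_mult divide_right_mono)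
qed

lemma sum_inverse_squares_le:
  assumes "finite K" "0 \<notin> K"
  shows "(\<Sum>k\<in>K. 1 / (real k)\<^sup>2) \<le> pi\<^sup>2 / 6"
proof -
  have pos: "k \<ge> 1" if "k \<in> K" for k
    using assms(2) that by (cases k) auto
  have "(\<Sum>k\<in>K. 1 / (real k)\<^sup>2) = (\<Sum>n\<in>(\<lambda>k. k - 1) ` K. 1 / (real (n + 1))\<^sup>2)"
    by (subst sum.reindex) (auto intro!: inj_onI sum.cong dest!: pos simp: of_nat_diff)
  also have "\<dots> \<le> (\<Sum>n. 1 / (real (n + 1))\<^sup>2)"
    using inverse_squares_sums assms(1) by (intro sum_le_suminf) (auto simp: sums_iff)
  also have "\<dots> = pi\<^sup>2 / 6"
    using inverse_squares_sums by (simp add: sums_iff)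
  finally show ?thesis .
qed

lemma sum_inverse_squares_separated_le:
  fixes mu :: "nat \<Rightarrow> real"
  assumes "d > 0" "finite F" and ge: "\<And>n. n \<in> F \<Longrightarrow> d \<le> mu n"
    and sep: "\<And>n n'. n \<in> F \<Longrightarrow> n' \<in> F \<Longrightarrow> n \<noteq> n' \<Longrightarrow> d \<le> \<bar>mu n - mu n'\<bar>"
  shows "(\<Sum>n\<in>F. 1 / (mu n)\<^sup>2) \<le> pi\<^sup>2 / 6 / d\<^sup>2"
proof -
  define j where "j n = nat \<lfloor>mu n / d\<rfloor>" for n
  have floor_ge_1: "1 \<le> \<lfloor>mu n / d\<rfloor>" if "n \<in> F" for n
    using ge[OF that] assms(1) by (simp add: le_divide_eq)
  have j_pos: "0 < j n" if "n \<in> F" for n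
    using floor_ge_1[OF that] by (simp add: j_def)
  have j_le: "real (j n) * d \<le> mu n" if "n \<in> F" for n
    using floor_ge_1[OF that] of_int_floor_le[of "mu n / d"] assms(1)
    by (simp add: j_def le_divide_eq mult.commute)
  have "inj_on j F"
  proof (rule inj_onI)
    fix n n' assume nF: "n \<in> F" "n' \<in> F" and "j n = j n'"
    then have "\<lfloor>mu n / d\<rfloor> = \<lfloor>mu n' / d\<rfloor>"
      using floor_ge_1[OF nF(1)] floor_ge_1[OF nF(2)] unfolding j_def
      by (metis eq_nat_nat_iff order_trans zero_le_one)
    then have "\<bar>mu n / d - mu n' / d\<bar> < 1"
      by linarith
    then have "\<bar>mu n - mu n'\<bar> < d"
      using assms(1) by (simp add: diff_divide_distrib[symmetric] abs_divide)
    then show "n = n'"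
      using sep[OF nF] by fastforce
  qed
  have "(\<Sum>n\<in>F. 1 / (mu n)\<^sup>2) \<le> (\<Sum>n\<in>F. 1 / d\<^sup>2 * (1 / (real (j n))\<^sup>2))"
  proof (rule sum_mono)
    fix n assume "n \<in> F"
    then have "0 < real (j n)" "real (j n) * d \<le> mu n"
      using j_pos j_le by auto
    then have "1 / (mu n)\<^sup>2 \<le> 1 / (real (j n) * d)\<^sup>2"
      using assms(1) ge[OF \<open>n \<in> F\<close>]
      by (intro divide_left_mono power_mono mult_pos_pos zero_less_power) auto
    then show "1 / (mu n)\<^sup>2 \<le> 1 / d\<^sup>2 * (1 / (real (j n))\<^sup>2)"
      by (simp add: power_mult_distrib mult.commute)
  qed
  also have "\<dots> = 1 / d\<^sup>2 * (\<Sum>k\<in>j ` F. 1 / (real k)\<^sup>2)"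
    by (simp add: sum_distrib_left sum.reindex[OF \<open>inj_on j F\<close>])
  also have "\<dots> \<le> 1 / d\<^sup>2 * (pi\<^sup>2 / 6)"
    using j_pos assms(2)
    by (intro mult_left_mono sum_inverse_squares_le) fastforce+
  finally show ?thesis by simp
qed

lemma sum_inverse_squares_separated_abs_le:
  fixes mu :: "nat \<Rightarrow> real"
  assumes "d > 0" "finite F" and ge: "\<And>n. n \<in> F \<Longrightarrow> d \<le> \<bar>mu n\<bar>"
    and sep: "\<And>n n'. n \<in> F \<Longrightarrow> n' \<in> F \<Longrightarrow> n \<noteq> n' \<Longrightarrow> d \<le> \<bar>mu n - mu n'\<bar>"
  shows "(\<Sum>n\<in>F. 1 / (mu n)\<^sup>2) \<le> pi\<^sup>2 / 3 / d\<^sup>2"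
proof -
  define Fp where "Fp = {n\<in>F. 0 < mu n}"
  define Fn where "Fn = {n\<in>F. mu n < 0}"
  have "mu n \<noteq> 0" if "n \<in> F" for n
    using ge[OF that] assms(1) by auto
  then have F_split: "F = Fp \<union> Fn"
    by (auto simp: Fp_def Fn_def linorder_neq_iff)
  have "(\<Sum>n\<in>F. 1 / (mu n)\<^sup>2) = (\<Sum>n\<in>Fp. 1 / (mu n)\<^sup>2) + (\<Sum>n\<in>Fn. 1 / (mu n)\<^sup>2)"
    unfolding F_split
    by (rule sum.union_disjoint) (use assms(2) in \<open>auto simp: Fp_def Fn_def\<close>)
  also have "\<dots> = (\<Sum>n\<in>Fp. 1 / (mu n)\<^sup>2) + (\<Sum>n\<in>Fn. 1 / (- mu n)\<^sup>2)"
    by simp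
  also have "\<dots> \<le> pi\<^sup>2 / 6 / d\<^sup>2 + pi\<^sup>2 / 6 / d\<^sup>2"
  proof (intro add_mono sum_inverse_squares_separated_le[OF assms(1)])
    show "finite Fp" "finite Fn"
      using assms(2) by (simp_all add: Fp_def Fn_def)
    show "d \<le> mu n" if "n \<in> Fp" for n
      using ge that by (force simp: Fp_def)
    show "d \<le> - mu n" if "n \<in> Fn" for n
      using ge that by (force simp: Fn_def)
    show "d \<le> \<bar>mu n - mu n'\<bar>" if "n \<in> Fp" "n' \<in> Fp" "n \<noteq> n'" for n n'
      using sep that by (simp add: Fp_def)
    show "d \<le> \<bar>- mu n - - mu n'\<bar>" if "n \<in> Fn" "n' \<in> Fn" "n \<noteq> n'" for n n'
      using sep[of n n'] that by (simp add: Fn_def abs_minus_commute)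
  qed
  finally show ?thesis by simp
qed

lemma norm_sum_integral_cis_squared_le:
  fixes a :: "nat \<Rightarrow> complex" and w :: "nat \<Rightarrow> real"
  assumes "finite F" "0 \<le> L"
    and bound: "\<And>u. u \<in> {0..2 * L} \<Longrightarrow> cmod (\<Sum>n\<in>F. a n * cis (w n * u)) \<le> B"
  shows "cmod (\<Sum>n\<in>F. a n * (integral {0..L} (\<lambda>s. cis (w n * s)))\<^sup>2) \<le> B * L\<^sup>2"
proof -
  define J where "J n = integral {0..L} (\<lambda>s. cis (w n * s))" for n
  have J: "((\<lambda>s. c * cis (w n * s)) has_integral c * J n) {0..L}" for c n
    unfolding J_def
    by (intro has_integral_mult_right integrable_integral integrable_continuous_interval
        continuous_intros)
  have "0 \<le> B"
    using bound[of 0] assms(2) by (simp add: order_trans[OF norm_ge_zero])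
  have inner: "cmod (\<Sum>n\<in>F. a n * cis (w n * t) * J n) \<le> B * L" if "t \<in> {0..L}" for t
  proof -
    have shift: "a n * cis (w n * (s + t)) = a n * cis (w n * t) * cis (w n * s)" for n s
      by (simp add: distrib_left cis_mult[symmetric] ac_simps)
    have "((\<lambda>s. \<Sum>n\<in>F. a n * cis (w n * (s + t))) has_integral
        (\<Sum>n\<in>F. a n * cis (w n * t) * J n)) (cbox 0 L)"
      unfolding shift by (simp add: has_integral_sum[OF assms(1)] J)
    from has_integral_bound[OF \<open>0 \<le> B\<close> this] show ?thesis
      using bound that assms(2) by force
  qed
  have "((\<lambda>t. \<Sum>n\<in>F. a n * cis (w n * t) * J n) has_integral (\<Sum>n\<in>F. a n * (J n)\<^sup>2)) (cbox 0 L)"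
    using has_integral_sum[OF assms(1) J[of "a n * J n" n for n]]
    by (simp add: power2_eq_square ac_simps)
  from has_integral_bound[of "B * L", OF _ this] have "cmod (\<Sum>n\<in>F. a n * (J n)\<^sup>2) \<le> B * L * L"
    using \<open>0 \<le> B\<close> assms(2) inner by simp
  then show ?thesis
    by (simp add: J_def power2_eq_square mult.assoc)
qed

lemma norm_sum_integral_cis_squared_separated_le:
  fixes a :: "nat \<Rightarrow> complex" and w :: "nat \<Rightarrow> real"
  assumes "finite F" "0 \<le> L" "0 < \<delta>" "0 \<le> A"
    and ge: "\<And>n. n \<in> F \<Longrightarrow> \<delta> \<le> \<bar>w n\<bar>"
    and sep: "\<And>n n'. n \<in> F \<Longrightarrow> n' \<in> F \<Longrightarrow> n \<noteq> n' \<Longrightarrow> \<delta> \<le> \<bar>w n - w n'\<bar>"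
    and coeff: "\<And>n. n \<in> F \<Longrightarrow> cmod (a n) \<le> A"
  shows "cmod (\<Sum>n\<in>F. a n * (integral {0..L} (\<lambda>s. cis (w n * s)))\<^sup>2) \<le> 4 * pi\<^sup>2 * A / (3 * \<delta>\<^sup>2)"
proof -
  define J where "J n = integral {0..L} (\<lambda>s. cis (w n * s))" for n
  have "cmod (\<Sum>n\<in>F. a n * (J n)\<^sup>2) \<le> (\<Sum>n\<in>F. A * (4 * (1 / (w n)\<^sup>2)))"
  proof (rule order_trans[OF norm_sum sum_mono])
    fix n assume "n \<in> F"
    then have "cmod (J n) \<le> 2 / \<bar>w n\<bar>"
      unfolding J_def using assms(2,3) ge by (intro norm_integral_cis_le) force+
    then have "(cmod (J n))\<^sup>2 \<le> 4 * (1 / (w n)\<^sup>2)"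
      using power_mono[of "cmod (J n)" "2 / \<bar>w n\<bar>" 2] by (simp add: power_divide)
    with coeff[OF \<open>n \<in> F\<close>] \<open>0 \<le> A\<close> show "cmod (a n * (J n)\<^sup>2) \<le> A * (4 * (1 / (w n)\<^sup>2))"
      unfolding norm_mult norm_power by (intro mult_mono) auto
  qed
  also have "\<dots> = 4 * A * (\<Sum>n\<in>F. 1 / (w n)\<^sup>2)"
    by (simp add: sum_distrib_left ac_simps)
  also have "\<dots> \<le> 4 * A * (pi\<^sup>2 / 3 / \<delta>\<^sup>2)"
    using assms by (intro mult_left_mono sum_inverse_squares_separated_abs_le) auto
  finally show ?thesis
    by (simp add: J_def ac_simps)
qed

text \<open>
  Shifting all frequencies by \<open>- lam m\<close> does not change the modulus of the sum; averaging the
  shifted sum twice over \<open>[0, L]\<close> turns the frequency-0 term into \<open>a m L\<^sup>2\<close> and every other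
  term into \<open>a n J\<^sub>n\<^sup>2\<close> with \<open>\<bar>J\<^sub>n\<bar> \<le> 2 / \<bar>lam n - lam m\<bar>\<close>.
\<close>
lemma norm_coeff_le_by_trig_sum_bound:
  fixes a :: "nat \<Rightarrow> complex" and lam :: "nat \<Rightarrow> real"
  assumes "finite F" "m \<in> F" "0 < L" "0 < \<delta>"
    and sep: "\<And>n n'. n \<in> F \<Longrightarrow> n' \<in> F \<Longrightarrow> n \<noteq> n' \<Longrightarrow> \<delta> \<le> \<bar>lam n - lam n'\<bar>"
    and coeff: "\<And>n. n \<in> F \<Longrightarrow> cmod (a n) \<le> A"
    and bound: "\<And>u. u \<in> {0..2 * L} \<Longrightarrow> cmod (\<Sum>n\<in>F. a n * cis (lam n * u)) \<le> B"
  shows "cmod (a m) * L\<^sup>2 \<le> B * L\<^sup>2 + 4 * pi\<^sup>2 * A / (3 * \<delta>\<^sup>2)"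
proof -
  define w where "w n = lam n - lam m" for n
  define J where "J n = integral {0..L} (\<lambda>s. cis (w n * s))" for n
  have "cmod (\<Sum>n\<in>F. a n * cis (w n * u)) = cmod (\<Sum>n\<in>F. a n * cis (lam n * u))" for u
  proof -
    have "cis (w n * u) = cis (- lam m * u) * cis (lam n * u)" for n
      by (simp add: w_def cis_mult algebra_simps)
    then have "(\<Sum>n\<in>F. a n * cis (w n * u)) = cis (- lam m * u) * (\<Sum>n\<in>F. a n * cis (lam n * u))"
      by (simp add: sum_distrib_left ac_simps)
    then show ?thesis
      by (simp add: norm_mult)
  qed
  then have total: "cmod (\<Sum>n\<in>F. a n * (J n)\<^sup>2) \<le> B * L\<^sup>2"
    unfolding J_def using assms(1,3) bound by (intro norm_sum_integral_cis_squared_le) auto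
  have "0 \<le> A"
    using coeff[OF assms(2)] norm_ge_zero order_trans by blast
  then have tail: "cmod (\<Sum>n\<in>F - {m}. a n * (J n)\<^sup>2) \<le> 4 * pi\<^sup>2 * A / (3 * \<delta>\<^sup>2)"
    unfolding J_def using assms(1-4) sep coeff
    by (intro norm_sum_integral_cis_squared_separated_le) (auto simp: w_def)
  have "J m = of_real L"
    using assms(3) by (simp add: J_def w_def scaleR_conv_of_real)
  then have "cmod (a m) * L\<^sup>2 = cmod ((\<Sum>n\<in>F. a n * (J n)\<^sup>2) - (\<Sum>n\<in>F - {m}. a n * (J n)\<^sup>2))"
    using assms(1,2,3) by (simp add: sum.remove norm_mult norm_power)
  also have "\<dots> \<le> B * L\<^sup>2 + 4 * pi\<^sup>2 * A / (3 * \<delta>\<^sup>2)"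
    using norm_triangle_ineq4 total tail by (rule order_trans[OF _ add_mono])
  finally show ?thesis .
qed

lemma trig_sums_uniform_limit_0_imp_coeff_0:
  fixes a :: "nat \<Rightarrow> complex" and lam :: "nat \<Rightarrow> real"
  assumes "0 < \<delta>" and sep: "\<And>n n'. n \<noteq> n' \<Longrightarrow> \<delta> \<le> \<bar>lam n - lam n'\<bar>"
    and coeff: "\<And>n. cmod (a n) \<le> A"
    and lim: "\<And>L. uniform_limit {0..L} (\<lambda>K u. \<Sum>n<K. a n * cis (lam n * u)) (\<lambda>_. 0) sequentially"
  shows "a m = 0"
proof (rule ccontr)
  define C where "C = 4 * pi\<^sup>2 * A / (3 * \<delta>\<^sup>2)"
  have bound: "cmod (a m) * L\<^sup>2 \<le> C" if "0 < L" for L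
  proof (rule field_le_epsilon)
    fix e :: real assume "0 < e"
    have close: "\<forall>\<^sub>F K in sequentially. \<forall>u\<in>{0..2 * L}. dist (\<Sum>n<K. a n * cis (lam n * u)) 0 < e / L\<^sup>2"
      using \<open>0 < e\<close> \<open>0 < L\<close> by (intro uniform_limitD[OF lim]) simp
    obtain K where "m < K"
      and K: "\<forall>u\<in>{0..2 * L}. cmod (\<Sum>n<K. a n * cis (lam n * u)) < e / L\<^sup>2"
    proof -
      obtain N where "\<forall>K\<ge>N. m < K \<and>
          (\<forall>u\<in>{0..2 * L}. dist (\<Sum>n<K. a n * cis (lam n * u)) 0 < e / L\<^sup>2)"
        using eventually_conj[OF eventually_gt_at_top[of m] close]
        unfolding eventually_sequentially by blast
      then show thesis
        using that[of N] by simp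
    qed
    have "cmod (a m) * L\<^sup>2 \<le> e / L\<^sup>2 * L\<^sup>2 + C"
      unfolding C_def
    proof (rule norm_coeff_le_by_trig_sum_bound[where F = "{..<K}"])
      show "cmod (\<Sum>n<K. a n * cis (lam n * u)) \<le> e / L\<^sup>2" if "u \<in> {0..2 * L}" for u
        using K that by (simp add: less_imp_le)
    qed (use \<open>m < K\<close> \<open>0 < L\<close> assms(1) sep coeff in auto)
    then show "cmod (a m) * L\<^sup>2 \<le> C + e"
      using \<open>0 < L\<close> by simp
  qed
  assume "a m \<noteq> 0"
  define L where "L = 1 + C / cmod (a m)"
  have "0 \<le> A"
    using coeff[of m] norm_ge_zero[of "a m"] by linarith
  then have "0 \<le> C"
    unfolding C_def using assms(1) by simp
  then have "1 \<le> L"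
    by (simp add: L_def)
  have "cmod (a m) + C = cmod (a m) * L"
    using \<open>a m \<noteq> 0\<close> by (simp add: L_def field_simps)
  also have "\<dots> \<le> cmod (a m) * L\<^sup>2"
    using \<open>1 \<le> L\<close> by (intro mult_left_mono) (auto simp: power2_eq_square)
  also have "\<dots> \<le> C"
    using bound \<open>1 \<le> L\<close> by simp
  finally show False
    using \<open>a m \<noteq> 0\<close> by simp
qed

section \<open>Local boundedness of one-parameter groups\<close>

lemma Baire_closed_cover_contains_ball:
  fixes E :: "nat \<Rightarrow> 'a::{real_normed_vector,heine_borel} set"
  assumes closed: "\<And>K. closed (E K)" and cover: "\<And>u. \<exists>K. u \<in> E K"
  obtains K c r where "0 < r" "ball c r \<subseteq> E K"
proof -
  have "\<exists>K. interior (E K) \<noteq> {}"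
  proof (rule ccontr)
    assume "\<nexists>K. interior (E K) \<noteq> {}"
    then have "UNIV \<subseteq> closure (\<Inter> (range (\<lambda>K. - E K)))"
      using closed by (intro Baire) (auto simp: closure_complement open_Compl)
    moreover have "\<Inter> (range (\<lambda>K. - E K)) = {}"
      using cover by auto
    ultimately show False
      by simp
  qed
  then obtain K c where "c \<in> interior (E K)"
    by blast
  then show thesis
    using that by (auto simp: mem_interior)
qed

lemma bounded_linear_family_bounded_on_ball:
  fixes T :: "'b::{real_normed_vector,heine_borel} \<Rightarrow> 'a::real_normed_vector \<Rightarrow> 'a"
  assumes bl: "\<And>u. bounded_linear (T u)"
    and cont: "\<And>v. v \<in> D \<Longrightarrow> continuous_on UNIV (\<lambda>u. T u v)"
    and dense: "closure D = UNIV"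
  obtains r c K where "0 < r" "\<forall>u\<in>ball c r. \<forall>z. norm (T u z) \<le> K * norm z"
proof -
  define E where "E K = {u. \<forall>v\<in>D. norm (T u v) \<le> real K * norm v}" for K
  have closed: "closed (E K)" for K
  proof -
    have "E K = (\<Inter>v\<in>D. {u. norm (T u v) \<le> real K * norm v})"
      by (auto simp: E_def)
    moreover have "closed {u. norm (T u v) \<le> real K * norm v}" if "v \<in> D" for v
      using cont[OF that] by (intro closed_Collect_le continuous_on_norm continuous_on_const)
    ultimately show ?thesis
      by (simp add: closed_INT)
  qed
  have cover: "\<exists>K. u \<in> E K" for u
  proof -
    have "norm (T u v) \<le> real (nat \<lceil>onorm (T u)\<rceil>) * norm v" for v
      using onorm[OF bl, of u v] mult_right_mono[OF real_nat_ceiling_ge norm_ge_zero]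
      by (rule order_trans)
    then show ?thesis
      unfolding E_def by blast
  qed
  obtain K c r where "0 < r" and ball: "ball c r \<subseteq> E K"
    using Baire_closed_cover_contains_ball[of E, OF closed cover] by blast
  have "norm (T u z) \<le> real K * norm z" if "u \<in> ball c r" for u z
  proof -
    have "closed {z. norm (T u z) \<le> real K * norm z}"
      using linear_continuous_on[OF bl[of u]]
      by (intro closed_Collect_le continuous_on_norm continuous_on_mult_left) auto
    moreover have "D \<subseteq> {z. norm (T u z) \<le> real K * norm z}"
      using ball that by (auto simp: E_def)
    ultimately have "closure D \<subseteq> {z. norm (T u z) \<le> real K * norm z}"
      by (rule closure_minimal[rotated])
    then show ?thesis
      using dense by auto
  qed
  then show thesis
    using \<open>0 < r\<close> that by blast
qed

lemma group_bounded_on_ball_imp_bounded_near_0: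
  fixes T :: "real \<Rightarrow> 'a::real_normed_vector \<Rightarrow> 'a"
  assumes add: "\<And>t s. T (t + s) = T t \<circ> T s" and bl: "\<And>t. bounded_linear (T t)"
    and ball: "\<And>u z. u \<in> ball c r \<Longrightarrow> norm (T u z) \<le> K * norm z"
  obtains Q where "0 \<le> Q" "\<forall>s z. \<bar>s\<bar> < r \<longrightarrow> norm (T s z) \<le> Q * norm z"
proof (rule that, safe)
  show "0 \<le> max 0 K * onorm (T (- c))"
    using onorm_pos_le[OF bl] by simp
  fix s z assume "\<bar>s\<bar> < r"
  have "T s z = T (c + s) (T (- c) z)"
    using add[of "c + s" "- c"] by simp
  also have "norm \<dots> \<le> K * norm (T (- c) z)"
    using \<open>\<bar>s\<bar> < r\<close> by (intro ball) (simp add: dist_norm)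
  also have "\<dots> \<le> max 0 K * norm (T (- c) z)"
    by (intro mult_right_mono) auto
  also have "\<dots> \<le> max 0 K * (onorm (T (- c)) * norm z)"
    using onorm[OF bl] by (intro mult_left_mono) auto
  finally show "norm (T s z) \<le> max 0 K * onorm (T (- c)) * norm z"
    by (simp add: mult.assoc)
qed

lemma group_bounded_near_0_imp_bounded_on_interval:
  fixes T :: "real \<Rightarrow> 'a::real_normed_vector \<Rightarrow> 'a"
  assumes add: "\<And>t s. T (t + s) = T t \<circ> T s" and T0: "T 0 = id"
    and "0 < r" "0 \<le> Q" and near_0: "\<forall>s z. \<bar>s\<bar> < r \<longrightarrow> norm (T s z) \<le> Q * norm z"
  obtains M where "\<forall>u z. \<bar>u\<bar> \<le> L \<longrightarrow> norm (T u z) \<le> M * norm z"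
proof -
  have power: "norm (T (real j * s) z) \<le> Q ^ j * norm z" if "\<bar>s\<bar> < r" for j s z
  proof (induction j arbitrary: z)
    case 0
    then show ?case
      using T0 by simp
  next
    case (Suc j)
    have "T (real (Suc j) * s) z = T s (T (real j * s) z)"
      using add[of s "real j * s"] by (simp add: algebra_simps)
    also have "norm \<dots> \<le> Q * norm (T (real j * s) z)"
      using near_0 that by blast
    also have "\<dots> \<le> Q * (Q ^ j * norm z)"
      using Suc.IH \<open>0 \<le> Q\<close> by (rule mult_left_mono)
    finally show ?case
      by simp
  qed
  define j where "j = nat \<lceil>\<bar>L\<bar> / r\<rceil> + 1"
  have "\<bar>L\<bar> / r < real j"
    using real_nat_ceiling_ge[of "\<bar>L\<bar> / r"] unfolding j_def by linarith
  then have "\<bar>L\<bar> < real j * r"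
    using \<open>0 < r\<close> by (simp add: pos_divide_less_eq)
  have "norm (T u z) \<le> Q ^ j * norm z" if "\<bar>u\<bar> \<le> L" for u z
  proof -
    have "\<bar>u / real j\<bar> < r"
      using \<open>\<bar>L\<bar> < real j * r\<close> that by (simp add: j_def abs_divide field_simps)
    then show ?thesis
      using power[of "u / real j" j z] by (simp add: j_def)
  qed
  then show thesis
    using that by blast
qed

lemma one_param_group_bounded_on_interval:
  fixes T :: "real \<Rightarrow> 'a::real_normed_vector \<Rightarrow> 'a"
  assumes add: "\<And>t s. T (t + s) = T t \<circ> T s" and T0: "T 0 = id"
    and bl: "\<And>t. bounded_linear (T t)"
    and cont: "\<And>v. v \<in> D \<Longrightarrow> continuous_on UNIV (\<lambda>u. T u v)"
    and dense: "closure D = UNIV"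
  obtains M where "\<forall>u z. \<bar>u\<bar> \<le> L \<longrightarrow> norm (T u z) \<le> M * norm z"
proof -
  obtain r c K where "0 < r" and "\<forall>u\<in>ball c r. \<forall>z. norm (T u z) \<le> K * norm z"
    using bounded_linear_family_bounded_on_ball[OF bl cont dense] .
  then have ball: "\<And>u z. u \<in> ball c r \<Longrightarrow> norm (T u z) \<le> K * norm z"
    by blast
  obtain Q where "0 \<le> Q" and near_0: "\<forall>s z. \<bar>s\<bar> < r \<longrightarrow> norm (T s z) \<le> Q * norm z"
    using group_bounded_on_ball_imp_bounded_near_0[OF add bl ball] .
  obtain M where "\<forall>u z. \<bar>u\<bar> \<le> L \<longrightarrow> norm (T u z) \<le> M * norm z"
    using group_bounded_near_0_imp_bounded_on_interval[OF add T0 \<open>0 < r\<close> \<open>0 \<le> Q\<close> near_0] .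
  then show thesis
    by (rule that)
qed

lemma uniform_limit_bounded_ops_null_sequence:
  fixes f :: "'a::real_normed_vector \<Rightarrow> 'b::real_normed_vector"
  assumes "bounded_linear f" and bound: "\<forall>u\<in>S. \<forall>z. norm (T u z) \<le> M * norm z"
    and "s \<longlonglongrightarrow> 0"
  shows "uniform_limit S (\<lambda>K u. f (T u (s K))) (\<lambda>_. 0) sequentially"
proof (rule uniform_limitI)
  fix e :: real assume "0 < e"
  define C where "C = onorm f * max 0 M"
  have "(\<lambda>K. C * norm (s K)) \<longlonglongrightarrow> C * 0"
    using \<open>s \<longlonglongrightarrow> 0\<close> by (intro tendsto_intros) (simp add: tendsto_norm_zero_iff)
  then have "\<forall>\<^sub>F K in sequentially. C * norm (s K) < e"
    using \<open>0 < e\<close> by (simp add: order_tendstoD(2))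
  moreover have "norm (f (T u z)) \<le> C * norm z" if "u \<in> S" for u z
  proof -
    have "norm (f (T u z)) \<le> onorm f * norm (T u z)"
      using onorm[OF assms(1)] .
    also have "\<dots> \<le> onorm f * (max 0 M * norm z)"
    proof (intro mult_left_mono onorm_pos_le[OF assms(1)])
      have "norm (T u z) \<le> M * norm z"
        using bound that by blast
      also have "\<dots> \<le> max 0 M * norm z"
        by (intro mult_right_mono) auto
      finally show "norm (T u z) \<le> max 0 M * norm z" .
    qed
    finally show ?thesis
      by (simp add: C_def mult.assoc)
  qed
  ultimately show "\<forall>\<^sub>F K in sequentially. \<forall>u\<in>S. dist (f (T u (s K))) 0 < e"
    by (auto elim!: eventually_mono intro: le_less_trans)
qed

lemma bounded_linear_bounded_on_summable_terms:
  fixes f :: "'a::real_normed_vector \<Rightarrow> 'b::real_normed_vector"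
  assumes "bounded_linear f" "summable g"
  obtains A where "\<forall>n. norm (f (g n)) \<le> A"
proof -
  have "Bseq g"
    using summable_LIMSEQ_zero[OF assms(2)] by (intro convergent_imp_Bseq convergentI)
  then obtain B where B: "\<forall>n. norm (g n) \<le> B"
    by (auto elim: BseqE)
  have "norm (f (g n)) \<le> onorm f * B" for n
    using onorm[OF assms(1), of "g n"] B onorm_pos_le[OF assms(1)]
    by (auto intro: order_trans mult_left_mono)
  then show thesis
    using that by blast
qed

lemma sums_nonzero_imp_coeff_nonzero:
  assumes "cscalar sm" "(\<lambda>n. sm (c n) (e n)) sums v" "v \<noteq> 0"
  obtains k where "c k \<noteq> 0"
proof -
  have "\<exists>k. c k \<noteq> 0"
  proof (rule ccontr)
    assume "\<nexists>k. c k \<noteq> 0"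
    then have "(\<lambda>_. 0) sums v"
      using assms(2) by (simp add: cscalar_zero_left[OF assms(1)])
    then show False
      using assms(3) sums_zero sums_unique2 by blast
  qed
  then show thesis
    using that by blast
qed

lemma eigen_group_bounded_on_interval:
  assumes "cscalar sm" "one_param_group sm T"
    and eigen: "\<And>n t. T t (e n) = sm (cis (lam n * t)) (e n)"
    and expansion: "\<And>z. \<exists>c. (\<lambda>n. sm (c n) (e n)) sums z"
  obtains M where "\<forall>u z. \<bar>u\<bar> \<le> L \<longrightarrow> norm (T u z) \<le> M * norm z"
proof -
  have add: "\<And>t s. T (t + s) = T t \<circ> T s" and T0: "T 0 = id"
    and op: "\<And>t. cbounded_op sm (T t)" and bl: "\<And>t. bounded_linear (T t)"
    using assms(2) unfolding one_param_group_def cbounded_op_def by auto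
  define D where "D = range (\<lambda>(c, K). \<Sum>n<K. sm (c n) (e n))"
  have cont: "continuous_on UNIV (\<lambda>u. T u v)" if v: "v \<in> D" for v
  proof -
    obtain c K where "v = (\<Sum>n<K. sm (c n) (e n))"
      using v unfolding D_def by auto
    then show ?thesis
      by (simp only: cbounded_op_sum_eigenvectors[OF assms(1) op eigen])
        (intro continuous_on_sum continuous_on_cscalar[OF assms(1)] continuous_intros)
  qed
  have "z \<in> closure D" for z
  proof -
    obtain c where c: "(\<lambda>n. sm (c n) (e n)) sums z"
      using expansion by blast
    show ?thesis
      unfolding closure_sequential
    proof (rule exI[of _ "\<lambda>K. \<Sum>n<K. sm (c n) (e n)"], intro conjI allI)
      show "(\<Sum>n<K. sm (c n) (e n)) \<in> D" for K
        unfolding D_def by (rule rev_image_eqI[of "(c, K)"]) auto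
      show "(\<lambda>K. \<Sum>n<K. sm (c n) (e n)) \<longlonglongrightarrow> z"
        using c by (simp add: sums_def)
    qed
  qed
  then have dense: "closure D = UNIV"
    by blast
  obtain M where "\<forall>u z. \<bar>u\<bar> \<le> L \<longrightarrow> norm (T u z) \<le> M * norm z"
    using one_param_group_bounded_on_interval[OF add T0 bl cont dense] .
  then show thesis
    by (rule that)
qed

lemma eigen_group_null_expansion_coeff_eq_0:
  fixes sm :: "complex \<Rightarrow> 'a::banach \<Rightarrow> 'a"
  assumes "cscalar sm" "one_param_group sm T"
    and eigen: "\<And>n t. T t (e n) = sm (cis (lam n * t)) (e n)"
    and expansion: "\<And>z. \<exists>c. (\<lambda>n. sm (c n) (e n)) sums z"
    and "0 < \<delta>" and sep: "\<And>n n'. n \<noteq> n' \<Longrightarrow> \<delta> \<le> \<bar>lam n - lam n'\<bar>"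
    and null: "(\<lambda>n. sm (d n) (e n)) sums 0" and "cdual sm f"
  shows "d m * f (e m) = 0"
proof -
  have "bounded_linear f" and f_sm: "\<And>c v. f (sm c v) = c * f v"
    using \<open>cdual sm f\<close> unfolding cdual_def by auto
  have op: "\<And>t. cbounded_op sm (T t)"
    using assms(2) unfolding one_param_group_def by auto
  define a where "a n = d n * f (e n)" for n
  define s where "s K = (\<Sum>n<K. sm (d n) (e n))" for K
  obtain A where "\<forall>n. norm (f (sm (d n) (e n))) \<le> A"
    using bounded_linear_bounded_on_summable_terms[OF \<open>bounded_linear f\<close>] null
    by (auto simp: sums_iff)
  then have "cmod (a n) \<le> A" for n
    by (simp add: a_def f_sm)
  moreover have "uniform_limit {0..L} (\<lambda>K u. \<Sum>n<K. a n * cis (lam n * u)) (\<lambda>_. 0) sequentially" for L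
  proof -
    obtain M where "\<forall>u z. \<bar>u\<bar> \<le> L \<longrightarrow> norm (T u z) \<le> M * norm z"
      using eigen_group_bounded_on_interval[OF assms(1,2) eigen expansion] .
    then have "uniform_limit {0..L} (\<lambda>K u. f (T u (s K))) (\<lambda>_. 0) sequentially"
      using null unfolding sums_def s_def
      by (intro uniform_limit_bounded_ops_null_sequence[OF \<open>bounded_linear f\<close>, where M = M]) auto
    moreover have "f (T u (s K)) = (\<Sum>n<K. a n * cis (lam n * u))" for u K
      unfolding s_def cbounded_op_sum_eigenvectors[OF assms(1) op eigen] a_def
      by (simp add: linear_sum[OF bounded_linear.linear[OF \<open>bounded_linear f\<close>]] f_sm ac_simps)
    ultimately show ?thesis
      by simp
  qed
  ultimately show ?thesis
    unfolding a_def[symmetric]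
    by (intro trig_sums_uniform_limit_0_imp_coeff_0[where lam = lam, OF \<open>0 < \<delta>\<close> sep])
qed

text \<open>
  Only the reconstruction formula \<open>z = \<Sum>n. y n z x n\<close> and the boundedness of each \<open>y n\<close>
  are used.
\<close>

theorem theorem11:
  fixes sm :: "complex \<Rightarrow> 'a::banach \<Rightarrow> 'a"
    and S :: "(nat \<Rightarrow> complex) set" and N :: "(nat \<Rightarrow> complex) \<Rightarrow> real"
    and x :: "nat \<Rightarrow> 'a" and y :: "nat \<Rightarrow> 'a \<Rightarrow> complex"
    and lam :: "nat \<Rightarrow> real"
  assumes "cscalar sm"
    and "Xd_space S N"
    and "is_cross_frame sm S N x y"
    and "\<not> cbasis sm x"
    and "\<exists>\<delta>>0. \<forall>n m. n \<noteq> m \<longrightarrow> \<bar>lam n - lam m\<bar> > \<delta>"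
  shows "\<not> (\<exists>T. one_param_group sm T \<and>
                (\<forall>n t. T t (x n) = sm (exp (\<i> * complex_of_real (lam n * t))) (x n)))"
proof
  assume "\<exists>T. one_param_group sm T \<and>
                (\<forall>n t. T t (x n) = sm (exp (\<i> * complex_of_real (lam n * t))) (x n))"
  then obtain T where "one_param_group sm T"
    and eigen: "\<And>n t. T t (x n) = sm (cis (lam n * t)) (x n)"
    by (auto simp: cis_conv_exp)
  have expand: "\<And>z. (\<lambda>n. sm (y n z) (x n)) sums z" and "\<And>n. x n \<noteq> 0"
    and "\<And>n. cdual sm (y n)"
    using assms(3) unfolding is_cross_frame_def is_coframe_def is_frame_def by auto
  have expansion: "\<exists>c. (\<lambda>n. sm (c n) (x n)) sums z" for z
    by (rule exI[of _ "\<lambda>n. y n z"]) (rule expand)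
  obtain \<delta> where "0 < \<delta>" and sep: "\<And>n m. n \<noteq> m \<Longrightarrow> \<delta> \<le> \<bar>lam n - lam m\<bar>"
    using assms(5) by (auto intro: less_imp_le)
  obtain d m where "d m \<noteq> 0" and null: "(\<lambda>n. sm (d n) (x n)) sums 0"
    using not_cbasis_imp_null_expansion[OF assms(1) expansion assms(4)] by blast
  obtain k where "y k (x m) \<noteq> 0"
    using sums_nonzero_imp_coeff_nonzero[OF assms(1) expand \<open>x m \<noteq> 0\<close>] .
  have "d m * y k (x m) = 0"
    using eigen_group_null_expansion_coeff_eq_0[where lam = lam, OF assms(1) \<open>one_param_group sm T\<close>
        eigen expansion \<open>0 < \<delta>\<close> sep null \<open>cdual sm (y k)\<close>] .
  with \<open>d m \<noteq> 0\<close> \<open>y k (x m) \<noteq> 0\<close> show False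
    by simp
qed

end
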